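(* Let $0<r^0<r^1$. There exists $\sigma_0\in(0,1)$ such that, for given $\gamma>1$, $p_b^+(r_b)>0$, $\rho_b^+(r_b)>0$ and $t(r_b)=(M_b^+)^2(r_b)\in(0,\sigma_0)$, there exists $r_*\in(r^0,r^1)$ so that the background solution determined by $\gamma$, $r_b\in(r_*,r^1)$, $p_b^+(r_b)$, $\rho_b^+(r_b)$ and $t(r_b)$ satisfies the S-Condition.
   Context: Radial flows $U=(p,\rho,u^0\partial_r)$ of a polytropic gas ($c^2=\gamma p/\rho$) satisfy $\frac{du^0}{dr}=\frac{2c^2u^0}{r((u^0)^2-c^2)}$, $\frac{d\rho}{dr}=-\frac{2\rho(u^0)^2}{r((u^0)^2-c^2)}$, $\frac{dp}{dr}=-\frac{2\rho c^2(u^0)^2}{r((u^0)^2-c^2)}$. The (subsonic part $U_b^+$ of the) background solution determined by $(\gamma,r_b,p_b^+(r_b),\rho_b^+(r_b),t(r_b))$, with $r_b\in(r^0,r^1)$, $t(r_b)\in(0,1)$, is the radial solution on $[r_b,r^1]$ with $p=p_b^+(r_b)$, $\rho=\rho_b^+(r_b)$, $(u^0)^2=t(r_b)c^2>0$ at $r=r_b$; it is subsonic, $M_b^+=(u^0)_b^+/c_b^+$ and $t(r)=(M_b^+)^2(r)$. S-Condition. Put $t_s=t(r_b)$ and (quantities evaluated at $r_b$) $\mu_0=\frac{\gamma+1}{2}\frac{((u^0)_b^+)^2}{(c^2-(u^0)^2)_b^+}$, $\mu_2=-\frac{4\rho_b^+}{(\gamma+1)r_b}((\gamma-1)(u^0)^2+c^2)_b^+$,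 $\mu_5=\frac{r_b^2((u^0)^2-c^2)_b^+}{\gamma p_b^+(u^0)_b^+}$, $\mu_6=\frac{8\gamma(u^0)_b^+(r_b)}{(\gamma+1)(1-t_s)}((\gamma-1)t_s^2+t_s+1)$, $\mu_7=-\mu_0\mu_6$, $\mu_9=-\mu_0\mu_2\mu_5$. With $t=t(r)$ define $e_1=r^2(1-t)$, $e_2=\frac{2r}{1-t}((1+2\gamma)t^2-3t+4)$, $e_3=\frac{-2}{(t-1)^3}(6-19t-7t^2(\gamma-2)+t^4\gamma(1+2\gamma)+t^3(-3+2\gamma-4\gamma^2))$, $e_4=\frac{1-t_s}{(\rho_b^+(r_b))^\gamma(1+(\gamma-1)t_s)}\cdot\frac{2(\rho_b^+(r))^\gamma(2+(\gamma-1)t)}{(1-t)^3}((2\gamma-3)t^2+8t-3)$. For $\lambda_n=n(n+1)$, $n\ge0$, consider on $y\in[0,1]$, with $e_i$ evaluated at $r=(r^1-r_b)y+r_b$: $e_1v''+(r^1-r_b)e_2v'+(r^1-r_b)^2(e_3-\lambda_n)v=-(r^1-r_b)^2e_4$, $v(0)=1$, $v(1)=0$, $v'(0)=-\frac{\lambda_n+\mu_7}{\mu_9}(r^1-r_b)$. The background solution satisfies the S-Condition if for every $n\ge0$ this problem has no solution. *)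

theory Defs
  imports "HOL-Analysis.Analysis"
begin

definition csq :: "real \<Rightarrow> (real \<Rightarrow> real) \<Rightarrow> (real \<Rightarrow> real) \<Rightarrow> real \<Rightarrow> real" where
  "csq \<gamma> p rho r = \<gamma> * p r / rho r"

definition radial_sol :: "real \<Rightarrow> real \<Rightarrow> real \<Rightarrow> (real \<Rightarrow> real) \<Rightarrow> (real \<Rightarrow> real) \<Rightarrow> (real \<Rightarrow> real) \<Rightarrow> bool" where
  "radial_sol \<gamma> a b u rho p \<longleftrightarrow>
     (\<forall>r\<in>{a..b}.
        (u has_real_derivative
           (2 * csq \<gamma> p rho r * u r / (r * ((u r)^2 - csq \<gamma> p rho r)))) (at r within {a..b}) \<and>
        (rho has_real_derivative
           (- 2 * rho r * (u r)^2 / (r * ((u r)^2 - csq \<gamma> p rho r)))) (at r within {a..b}) \<and>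
        (p has_real_derivative
           (- 2 * rho r * csq \<gamma> p rho r * (u r)^2 / (r * ((u r)^2 - csq \<gamma> p rho r)))) (at r within {a..b}))"

definition background_sol ::
  "real \<Rightarrow> real \<Rightarrow> real \<Rightarrow> real \<Rightarrow> real \<Rightarrow> real \<Rightarrow> (real \<Rightarrow> real) \<Rightarrow> (real \<Rightarrow> real) \<Rightarrow> (real \<Rightarrow> real) \<Rightarrow> bool" where
  "background_sol \<gamma> r1 rb pb rhob ts u rho p \<longleftrightarrow>
     radial_sol \<gamma> rb r1 u rho p \<and>
     p rb = pb \<and> rho rb = rhob \<and> (u rb)^2 = ts * csq \<gamma> p rho rb \<and>
     (\<forall>r\<in>{rb..r1}. rho r > 0 \<and> p r > 0 \<and> u r > 0 \<and> (u r)^2 < csq \<gamma> p rho r)"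

definition tfun :: "real \<Rightarrow> (real \<Rightarrow> real) \<Rightarrow> (real \<Rightarrow> real) \<Rightarrow> (real \<Rightarrow> real) \<Rightarrow> real \<Rightarrow> real" where
  "tfun \<gamma> u rho p r = (u r)^2 / csq \<gamma> p rho r"

definition e1 :: "real \<Rightarrow> real \<Rightarrow> real" where
  "e1 r t = r^2 * (1 - t)"

definition e2 :: "real \<Rightarrow> real \<Rightarrow> real \<Rightarrow> real" where
  "e2 \<gamma> r t = 2 * r / (1 - t) * ((1 + 2*\<gamma>) * t^2 - 3*t + 4)"

definition e3 :: "real \<Rightarrow> real \<Rightarrow> real" where
  "e3 \<gamma> t = -2 / (t - 1)^3 *
     (6 - 19*t - 7 * t^2 * (\<gamma> - 2) + t^4 * \<gamma> * (1 + 2*\<gamma>) + t^3 * (-3 + 2*\<gamma> - 4*\<gamma>^2))"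

text \<open>e4 with ts = t(r_b), rhob = rho_b^+(r_b), rhor = rho_b^+(r), t = t(r).\<close>
definition e4 :: "real \<Rightarrow> real \<Rightarrow> real \<Rightarrow> real \<Rightarrow> real \<Rightarrow> real" where
  "e4 \<gamma> ts rhob rhor t =
     (1 - ts) / (rhob powr \<gamma> * (1 + (\<gamma> - 1) * ts)) *
     (2 * rhor powr \<gamma> * (2 + (\<gamma> - 1) * t) / (1 - t)^3 * ((2*\<gamma> - 3) * t^2 + 8*t - 3))"

definition mu0 :: "real \<Rightarrow> real \<Rightarrow> real \<Rightarrow> real" where
  "mu0 \<gamma> u c2 = (\<gamma> + 1) / 2 * u^2 / (c2 - u^2)"

definition mu2 :: "real \<Rightarrow> real \<Rightarrow> real \<Rightarrow> real \<Rightarrow> real \<Rightarrow> real" where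
  "mu2 \<gamma> rb rhob u c2 = - 4 * rhob / ((\<gamma> + 1) * rb) * ((\<gamma> - 1) * u^2 + c2)"

definition mu5 :: "real \<Rightarrow> real \<Rightarrow> real \<Rightarrow> real \<Rightarrow> real \<Rightarrow> real" where
  "mu5 \<gamma> rb pb u c2 = rb^2 * (u^2 - c2) / (\<gamma> * pb * u)"

definition mu6 :: "real \<Rightarrow> real \<Rightarrow> real \<Rightarrow> real" where
  "mu6 \<gamma> u ts = 8 * \<gamma> * u / ((\<gamma> + 1) * (1 - ts)) * ((\<gamma> - 1) * ts^2 + ts + 1)"

definition S_condition ::
  "real \<Rightarrow> real \<Rightarrow> real \<Rightarrow> (real \<Rightarrow> real) \<Rightarrow> (real \<Rightarrow> real) \<Rightarrow> (real \<Rightarrow> real) \<Rightarrow> bool" where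
  "S_condition \<gamma> r1 rb u rho p \<longleftrightarrow>
    (let ts = tfun \<gamma> u rho p rb;
         ub = u rb; c2b = csq \<gamma> p rho rb; rhob = rho rb; pb = p rb;
         m0 = mu0 \<gamma> ub c2b;
         m7 = - m0 * mu6 \<gamma> ub ts;
         m9 = - m0 * mu2 \<gamma> rb rhob ub c2b * mu5 \<gamma> rb pb ub c2b;
         L = r1 - rb;
         R = (\<lambda>y. L * y + rb);
         T = (\<lambda>y. tfun \<gamma> u rho p (R y))
     in \<forall>n::nat. let lam = real n * (real n + 1) in
        \<not> (\<exists>v v' v''.
              (\<forall>y\<in>{0..1}.
                 (v has_real_derivative v' y) (at y within {0..1}) \<and>
                 (v' has_real_derivative v'' y) (at y within {0..1}) \<and>
                 e1 (R y) (T y) * v'' y + L * e2 \<gamma> (R y) (T y) * v' y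
                   + L^2 * (e3 \<gamma> (T y) - lam) * v y
                 = - (L^2 * e4 \<gamma> ts rhob (rho (R y)) (T y))) \<and>
              v 0 = 1 \<and> v 1 = 0 \<and> v' 0 = - (lam + m7) / m9 * L))"

end

theory Submission
  imports Defs
begin

text \<open>Along a subsonic radial flow the squared Mach number t = u^2 rho / (gamma p) decreases, so for
  t(r_b) \<le> 1/2 the flow stays uniformly subsonic on [r_b, r^1] and rho grows at most like
  exp (2 r / r^0). Hence e_2, e_3, e_4 are bounded by a constant B independent of r_b, e_1 \<ge> (r^0)^2/2,
  and the prescribed slope satisfies v'(0) \<ge> - (8 gamma / r^0) L with L = r^1 - r_b.
  For L B small the problem is a perturbation of v'' = 0: the barrier h = v' + (1/20 + y/4) v
  cannot reach zero while v \<ge> 1/2 (the equation would force h' > 0 there), and while h \<ge> 0 an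
  integrating factor keeps v \<ge> 1/2. So v(1) > 0, contradicting v(1) = 0.\<close>

lemma DERIV_nonneg_imp_nondecreasing_within:
  fixes f f' :: "real \<Rightarrow> real"
  assumes "x \<le> y" and "{x..y} \<subseteq> S"
    and deriv: "\<And>z. z \<in> {x..y} \<Longrightarrow> (f has_real_derivative f' z) (at z within S)"
    and nonneg: "\<And>z. z \<in> {x..y} \<Longrightarrow> f' z \<ge> 0"
  shows "f x \<le> f y"
proof -
  have "\<exists>z\<in>{x..y}. f y - f x = (\<lambda>h. f' z * h) (y - x)"
  proof (rule mvt_very_simple[OF \<open>x \<le> y\<close>])
    fix z assume "x \<le> z" "z \<le> y"
    with deriv[of z] \<open>{x..y} \<subseteq> S\<close> show "(f has_derivative (\<lambda>h. f' z * h)) (at z within {x..y})"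
      by (auto simp: has_field_derivative_def intro: has_derivative_subset)
  qed
  then obtain z where "z \<in> {x..y}" "f y - f x = f' z * (y - x)" by auto
  with nonneg[of z] \<open>x \<le> y\<close> show ?thesis
    by (metis diff_ge_0_iff_ge mult_nonneg_nonneg)
qed

lemma first_zero_of_continuous:
  fixes h :: "real \<Rightarrow> real"
  assumes cont: "continuous_on {0..1} h" and "h 0 > 0"
    and "y0 \<in> {0..1}" "h y0 \<le> 0"
  obtains y where "y \<in> {0<..1}" "h y = 0" "\<And>z. z \<in> {0..<y} \<Longrightarrow> h z > 0"
proof -
  let ?Z = "{x \<in> {0..1}. h x = 0}"
  have zero_below: "\<exists>x. 0 \<le> x \<and> x \<le> z \<and> h x = 0" if "z \<in> {0..1}" "h z \<le> 0" for z
    by (rule IVT2'[of h z 0 0]) (use that \<open>h 0 > 0\<close> in \<open>auto intro: continuous_on_subset[OF cont]\<close>)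
  have "?Z \<noteq> {}" using zero_below[OF \<open>y0 \<in> {0..1}\<close> \<open>h y0 \<le> 0\<close>] \<open>y0 \<in> {0..1}\<close> by force
  moreover have bdd: "bdd_below ?Z" by (auto intro: bdd_belowI[of _ 0])
  moreover have "closed ?Z" by (rule continuous_closed_preimage_constant[OF cont]) auto
  ultimately have "Inf ?Z \<in> ?Z" by (rule closed_contains_Inf)
  moreover have "Inf ?Z \<noteq> 0" using calculation \<open>h 0 > 0\<close> by auto
  moreover have "h z > 0" if "z \<in> {0..<Inf ?Z}" for z
  proof (rule ccontr)
    assume "\<not> h z > 0"
    moreover have "z \<in> {0..1}" using that \<open>Inf ?Z \<in> ?Z\<close> by auto
    ultimately obtain x where "0 \<le> x" "x \<le> z" "h x = 0"
      using zero_below[of z] by auto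
    then have "Inf ?Z \<le> x" using that \<open>Inf ?Z \<in> ?Z\<close> by (intro cInf_lower[OF _ bdd]) auto
    with \<open>x \<le> z\<close> that show False by auto
  qed
  ultimately show thesis by (intro that[of "Inf ?Z"]) auto
qed

lemma deriv_nonpos_at_first_zero:
  fixes h :: "real \<Rightarrow> real"
  assumes deriv: "(h has_real_derivative l) (at y within {0..1})"
    and "0 < y" "y \<le> 1" "h y = 0" and pos: "\<And>z. z \<in> {0..<y} \<Longrightarrow> h z > 0"
  shows "l \<le> 0"
proof (rule ccontr)
  assume "\<not> l \<le> 0"
  then obtain d where "d > 0" and below: "\<And>e. e > 0 \<Longrightarrow> y - e \<in> {0..1} \<Longrightarrow> e < d \<Longrightarrow> h (y - e) < h y"
    using has_real_derivative_pos_inc_left[OF deriv] by force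
  define e where "e = min (d/2) y"
  have "0 < e" "e < d" "e \<le> y" using \<open>d > 0\<close> \<open>0 < y\<close> by (auto simp: e_def)
  then show False using below[of e] pos[of "y - e"] assms(3-4) by auto
qed

lemma integrating_factor_lower_bound:
  fixes v v' :: "real \<Rightarrow> real"
  assumes deriv: "\<And>y. y \<in> {0..1} \<Longrightarrow> (v has_real_derivative v' y) (at y within {0..1})"
    and "v 0 = 1" and "0 \<le> g0" "g0 \<le> 1/20" and "y \<in> {0..1}"
    and nonneg: "\<And>z. z \<in> {0..y} \<Longrightarrow> v' z + (g0 + z/4) * v z \<ge> 0"
  shows "v y \<ge> 1/2"
proof -
  define G where "G z = g0 * z + z^2/8" for z :: real
  define F where "F z = v z * exp (G z)" for z
  have "F 0 \<le> F y"
  proof (rule DERIV_nonneg_imp_nondecreasing_within[where S = "{0..1}" and f = F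
      and f' = "\<lambda>z. (v' z + (g0 + z/4) * v z) * exp (G z)"])
    fix z assume "z \<in> {0..y}"
    then have "z \<in> {0..1}" using \<open>y \<in> {0..1}\<close> by auto
    have "((\<lambda>z. exp (G z)) has_real_derivative exp (G z) * (g0 + z/4)) (at z within {0..1})"
      unfolding G_def by (auto intro!: derivative_eq_intros)
    from DERIV_mult'[OF deriv[OF \<open>z \<in> {0..1}\<close>] this]
    show "(F has_real_derivative (v' z + (g0 + z/4) * v z) * exp (G z)) (at z within {0..1})"
      unfolding F_def by (simp add: algebra_simps)
    show "(v' z + (g0 + z/4) * v z) * exp (G z) \<ge> 0"
      using nonneg[OF \<open>z \<in> {0..y}\<close>] by simp
  qed (use \<open>y \<in> {0..1}\<close> in auto)
  then have "exp (- G y) \<le> v y" by (simp add: F_def G_def \<open>v 0 = 1\<close> exp_minus field_simps)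
  moreover have "1 - G y \<le> exp (- G y)" using exp_ge_add_one_self[of "- G y"] by simp
  moreover have "G y \<le> 1/20 + 1/8"
  proof -
    have "g0 * y \<le> g0" using assms(3,5) by (simp add: mult_left_le)
    then have "g0 * y \<le> 1/20" using \<open>g0 \<le> 1/20\<close> by linarith
    moreover have "y^2 \<le> 1" using \<open>y \<in> {0..1}\<close> by (simp add: power_le_one)
    ultimately show ?thesis by (simp add: G_def)
  qed
  ultimately show ?thesis by simp
qed

lemma positive_at_end_by_barrier:
  fixes v v' v'' :: "real \<Rightarrow> real"
  assumes d1: "\<And>y. y \<in> {0..1} \<Longrightarrow> (v has_real_derivative v' y) (at y within {0..1})"
    and d2: "\<And>y. y \<in> {0..1} \<Longrightarrow> (v' has_real_derivative v'' y) (at y within {0..1})"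
    and "v 0 = 1" and "0 \<le> g0" "g0 \<le> 1/20" and "v' 0 + g0 > 0"
    and barrier: "\<And>y g. y \<in> {0..1} \<Longrightarrow> 0 \<le> g \<Longrightarrow> g \<le> 3/10 \<Longrightarrow> v y \<ge> 1/2 \<Longrightarrow>
        v' y = - g * v y \<Longrightarrow> v'' y + (1/4 - g^2) * v y > 0"
  shows "v 1 > 0"
proof -
  define h where "h y = v' y + (g0 + y/4) * v y" for y
  have dh: "(h has_real_derivative v'' y + v y / 4 + (g0 + y/4) * v' y) (at y within {0..1})"
    if "y \<in> {0..1}" for y
    unfolding h_def by (rule derivative_eq_intros d1 d2 that refl | simp)+
  have "continuous_on {0..1} h"
    using dh by (meson DERIV_continuous continuous_on_eq_continuous_within)
  show ?thesis
  proof (cases "\<forall>y\<in>{0..1}. h y > 0")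
    case True
    then have "v 1 \<ge> 1/2"
      by (intro integrating_factor_lower_bound[OF d1 assms(3-5)]) (auto simp: h_def less_imp_le)
    then show ?thesis by simp
  next
    case False
    then obtain y0 where "y0 \<in> {0..1}" "h y0 \<le> 0" by (auto simp: not_less)
    moreover have "h 0 > 0" using assms(3,6) by (simp add: h_def)
    ultimately obtain y where y: "y \<in> {0<..1}" and "h y = 0" and pos: "\<And>z. z \<in> {0..<y} \<Longrightarrow> h z > 0"
      using first_zero_of_continuous[OF \<open>continuous_on {0..1} h\<close>] by metis
    then have "y \<in> {0..1}" by auto
    have "v y \<ge> 1/2"
    proof (rule integrating_factor_lower_bound[OF d1 assms(3-5) \<open>y \<in> {0..1}\<close>])
      fix z assume "z \<in> {0..y}"
      then have "h z \<ge> 0" using pos[of z] \<open>h y = 0\<close> by (cases "z = y") auto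
      then show "v' z + (g0 + z/4) * v z \<ge> 0" by (simp add: h_def)
    qed
    moreover have "v' y = - (g0 + y/4) * v y" using \<open>h y = 0\<close> by (simp add: h_def algebra_simps)
    ultimately have "v'' y + (1/4 - (g0 + y/4)^2) * v y > 0"
      using barrier[of y "g0 + y/4"] \<open>y \<in> {0..1}\<close> assms(4,5) by auto
    moreover have "v'' y + v y / 4 + (g0 + y/4) * v' y \<le> 0"
      using deriv_nonpos_at_first_zero[OF dh[OF \<open>y \<in> {0..1}\<close>]] y \<open>h y = 0\<close> pos by auto
    moreover have "v'' y + v y / 4 + (g0 + y/4) * v' y = v'' y + (1/4 - (g0 + y/4)^2) * v y"
      unfolding \<open>v' y = _\<close> by (simp add: power2_eq_square algebra_simps)
    ultimately show ?thesis by linarith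
  qed
qed

lemma perturbed_ode_barrier_pointwise:
  fixes E1 E2 E3 E4 L B a lam V V' V'' g :: real
  assumes E1: "E1 \<ge> a" "a > 0" and E2: "\<bar>E2\<bar> \<le> B" and E3: "\<bar>E3\<bar> \<le> B" and E4: "\<bar>E4\<bar> \<le> B"
    and L: "0 < L" "L \<le> 1" "L * B \<le> a / 50" and "lam \<ge> 0"
    and V: "V \<ge> 1/2" and g: "0 \<le> g" "g \<le> 3/10" and "V' = - g * V"
    and ode: "E1 * V'' + L * E2 * V' + L^2 * (E3 - lam) * V = - (L^2 * E4)"
  shows "V'' + (1/4 - g^2) * V > 0"
proof -
  define S where "S = L * B"
  have "V > 0" using V by simp
  have "L^2 \<le> L" using L by (simp add: power2_eq_square mult_left_le)
  have "L * E2 * g * V \<ge> - (S * V)"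
  proof -
    have "\<bar>L * E2 * g * V\<bar> = L * \<bar>E2\<bar> * g * V" using L g \<open>V > 0\<close> by (simp add: abs_mult)
    also have "\<dots> \<le> L * B * 1 * V" using L g \<open>V > 0\<close> E2 by (intro mult_mono mult_right_mono) auto
    finally show ?thesis by (simp add: S_def)
  qed
  moreover have "L^2 * E3 * V \<le> S * V"
  proof -
    have "L^2 * E3 * V \<le> L^2 * \<bar>E3\<bar> * V" using \<open>V > 0\<close> by (intro mult_right_mono mult_left_mono) auto
    also have "\<dots> \<le> L * B * V" using \<open>L^2 \<le> L\<close> E3 \<open>V > 0\<close> L by (intro mult_right_mono mult_mono) auto
    finally show ?thesis by (simp add: S_def)
  qed
  moreover have "L^2 * E4 \<le> S"
  proof -
    have "L^2 * E4 \<le> L^2 * \<bar>E4\<bar>" by (intro mult_left_mono) auto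
    also have "\<dots> \<le> L * B" using \<open>L^2 \<le> L\<close> E4 L by (intro mult_mono) auto
    finally show ?thesis by (simp add: S_def)
  qed
  moreover have "L^2 * lam * V \<ge> 0" using \<open>lam \<ge> 0\<close> \<open>V > 0\<close> by simp
  moreover have "E1 * (1/4 - g^2) * V \<ge> a * (4/25) * V"
  proof -
    have "g^2 \<le> (3/10)^2" using g by (intro power_mono) auto
    then have "4/25 \<le> 1/4 - g^2" by (simp add: power2_eq_square)
    then show ?thesis using E1 \<open>V > 0\<close> by (intro mult_right_mono mult_mono) auto
  qed
  moreover have "E1 * (V'' + (1/4 - g^2) * V)
      = L * E2 * g * V - L^2 * E3 * V + L^2 * lam * V - L^2 * E4 + E1 * (1/4 - g^2) * V"
    using ode unfolding \<open>V' = _\<close> by (simp add: algebra_simps)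
  moreover have "S * V \<le> a / 50 * V" using L \<open>V > 0\<close> by (simp add: S_def)
  moreover have "a * V \<ge> a / 2" using V E1 by (simp add: mult_left_mono[of "1/2" V a, simplified])
  ultimately have "E1 * (V'' + (1/4 - g^2) * V) > 0" using L(3) E1 unfolding S_def by linarith
  then show ?thesis using E1 by (simp add: zero_less_mult_iff)
qed

lemma perturbed_bvp_no_solution:
  fixes E1 E2 E3 E4 :: "real \<Rightarrow> real" and L B a lam s :: real
  assumes coeffs: "\<And>y. y \<in> {0..1} \<Longrightarrow> E1 y \<ge> a \<and> \<bar>E2 y\<bar> \<le> B \<and> \<bar>E3 y\<bar> \<le> B \<and> \<bar>E4 y\<bar> \<le> B"
    and "a > 0" "0 < L" "L \<le> 1" "L * B \<le> a / 50" "L * B < 1/20" "lam \<ge> 0" "s \<ge> - B"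
  shows "\<not> (\<exists>v v' v''.
    (\<forall>y\<in>{0..1}.
       (v has_real_derivative v' y) (at y within {0..1}) \<and>
       (v' has_real_derivative v'' y) (at y within {0..1}) \<and>
       E1 y * v'' y + L * E2 y * v' y + L^2 * (E3 y - lam) * v y = - (L^2 * E4 y)) \<and>
    v 0 = 1 \<and> v 1 = 0 \<and> v' 0 = s * L)"
proof
  assume "\<exists>v v' v''.
    (\<forall>y\<in>{0..1}.
       (v has_real_derivative v' y) (at y within {0..1}) \<and>
       (v' has_real_derivative v'' y) (at y within {0..1}) \<and>
       E1 y * v'' y + L * E2 y * v' y + L^2 * (E3 y - lam) * v y = - (L^2 * E4 y)) \<and>
    v 0 = 1 \<and> v 1 = 0 \<and> v' 0 = s * L"
  then obtain v v' v'' where sol: "\<And>y. y \<in> {0..1} \<Longrightarrow>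
       (v has_real_derivative v' y) (at y within {0..1}) \<and>
       (v' has_real_derivative v'' y) (at y within {0..1}) \<and>
       E1 y * v'' y + L * E2 y * v' y + L^2 * (E3 y - lam) * v y = - (L^2 * E4 y)"
    and "v 0 = 1" "v 1 = 0" "v' 0 = s * L"
    by blast
  have "- B * L \<le> s * L" using \<open>s \<ge> - B\<close> \<open>0 < L\<close> by (intro mult_right_mono) auto
  then have "v' 0 + 1/20 > 0" using \<open>v' 0 = s * L\<close> \<open>L * B < 1/20\<close> by (simp add: mult.commute)
  have "v 1 > 0"
  proof (rule positive_at_end_by_barrier[of v v' v'' "1/20"])
    fix y g assume y: "y \<in> {0..1}" and g: "0 \<le> g" "g \<le> 3/10" "v y \<ge> 1/2" "v' y = - g * v y"
    have c: "E1 y \<ge> a" "\<bar>E2 y\<bar> \<le> B" "\<bar>E3 y\<bar> \<le> B" "\<bar>E4 y\<bar> \<le> B"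
      using coeffs[OF y] by auto
    show "v'' y + (1/4 - g^2) * v y > 0"
      using sol[OF y] by (intro perturbed_ode_barrier_pointwise[OF c(1) \<open>a > 0\<close> c(2-4) assms(3-5,7) g(3,1,2,4)]) auto
  qed (use sol \<open>v 0 = 1\<close> \<open>v' 0 + 1/20 > 0\<close> in auto)
  with \<open>v 1 = 0\<close> show False by simp
qed

text \<open>The left-hand side is the numerator of (u^2 rho / p)' along a radial solution.\<close>

lemma radial_mach_sq_deriv_nonpos:
  fixes U Ud R Rd P Pd r \<gamma> c :: real
  assumes "U > 0" "R > 0" "P > 0" "r > 0" "\<gamma> > 1"
    and c: "c = \<gamma> * P / R" and "U^2 < c"
    and Ud: "Ud = 2 * c * U / (r * (U^2 - c))"
    and Rd: "Rd = - 2 * R * U^2 / (r * (U^2 - c))"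
    and Pd: "Pd = - 2 * R * c * U^2 / (r * (U^2 - c))"
  shows "2 * U * Ud * R * P + U^2 * Rd * P - U^2 * R * Pd \<le> 0"
proof -
  define D where "D = r * (U^2 - c)"
  have "D < 0" unfolding D_def using assms(4,7) by (simp add: mult_pos_neg)
  have "c > 0" using \<open>U^2 < c\<close> zero_le_power2[of U] by linarith
  have "R * c = \<gamma> * P" using c \<open>R > 0\<close> by simp
  have "2 * U * Ud * R * P + U^2 * Rd * P - U^2 * R * Pd
      = 2 * R * U^2 * P * (2 * c + (\<gamma> - 1) * U^2) / D"
    unfolding Ud Rd Pd D_def[symmetric] using \<open>R * c = \<gamma> * P\<close>
    by (simp add: add_divide_distrib diff_divide_distrib power2_eq_square algebra_simps)
  also have "\<dots> \<le> 0"
    using assms \<open>D < 0\<close> \<open>c > 0\<close> by (intro divide_nonneg_neg mult_nonneg_nonneg add_nonneg_nonneg) auto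
  finally show ?thesis .
qed

lemma background_sol_tfun_bounds:
  fixes u rho p :: "real \<Rightarrow> real"
  assumes "0 < rb" "\<gamma> > 1" and bg: "background_sol \<gamma> r1 rb pb rhob ts u rho p"
    and r: "r \<in> {rb..r1}"
  shows "0 < tfun \<gamma> u rho p r" "tfun \<gamma> u rho p r \<le> ts"
proof -
  define c where "c r = csq \<gamma> p rho r" for r
  define ud where "ud r = 2 * c r * u r / (r * ((u r)^2 - c r))" for r
  define rd where "rd r = - 2 * rho r * (u r)^2 / (r * ((u r)^2 - c r))" for r
  define pd where "pd r = - 2 * rho r * c r * (u r)^2 / (r * ((u r)^2 - c r))" for r
  have du: "(u has_real_derivative ud r) (at r within {rb..r1})"
    and dr: "(rho has_real_derivative rd r) (at r within {rb..r1})"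
    and dp: "(p has_real_derivative pd r) (at r within {rb..r1})"
    and pos: "rho r > 0" "p r > 0" "u r > 0" "(u r)^2 < c r"
    if "r \<in> {rb..r1}" for r
    using bg that unfolding background_sol_def radial_sol_def ud_def rd_def pd_def c_def by auto
  have c_eq: "c r = \<gamma> * p r / rho r" for r unfolding c_def csq_def by simp
  define N where "N z = 2 * u z * ud z * rho z * p z + (u z)^2 * rd z * p z - (u z)^2 * rho z * pd z" for z
  have t_eq: "tfun \<gamma> u rho p r = (u r)^2 * rho r / p r / \<gamma>" for r
    unfolding tfun_def csq_def using \<open>\<gamma> > 1\<close> by simp
  show "0 < tfun \<gamma> u rho p r" unfolding t_eq using pos[OF r] \<open>\<gamma> > 1\<close> by simp
  have "(u r)^2 * rho r / p r \<le> (u rb)^2 * rho rb / p rb"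
  proof -
    have "- ((u rb)^2 * rho rb / p rb) \<le> - ((u r)^2 * rho r / p r)"
    proof (rule DERIV_nonneg_imp_nondecreasing_within[where S = "{rb..r1}"
        and f = "\<lambda>x. - ((u x)^2 * rho x / p x)"
        and f' = "\<lambda>z. - (N z / (p z)^2)"])
      fix z assume "z \<in> {rb..r}"
      then have z: "z \<in> {rb..r1}" "z > 0" using r \<open>0 < rb\<close> by auto
      show "((\<lambda>x. - ((u x)^2 * rho x / p x)) has_real_derivative - (N z / (p z)^2)) (at z within {rb..r1})"
        using pos[OF z(1)] unfolding N_def
        by (auto intro!: derivative_eq_intros du[OF z(1)] dr[OF z(1)] dp[OF z(1)]
            simp: power2_eq_square field_simps)
      have "N z \<le> 0" unfolding N_def
        by (rule radial_mach_sq_deriv_nonpos[OF pos(3,1,2)[OF z(1)] z(2) \<open>\<gamma> > 1\<close> c_eq pos(4)[OF z(1)]])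
           (simp_all add: ud_def rd_def pd_def)
      then show "0 \<le> - (N z / (p z)^2)"
        using divide_nonpos_nonneg[OF _ zero_le_power2] by (simp only: neg_0_le_iff_le)
    qed (use r in auto)
    then show ?thesis by simp
  qed
  moreover have "tfun \<gamma> u rho p rb = ts"
    using bg pos(4)[of rb] r unfolding background_sol_def tfun_def c_def by auto
  ultimately show "tfun \<gamma> u rho p r \<le> ts"
    unfolding t_eq using \<open>\<gamma> > 1\<close> by (metis divide_right_mono less_le_not_le less_trans zero_less_one)
qed

lemma radial_density_deriv_le:
  fixes U R r r0 c Rd :: real
  assumes "R > 0" "r0 \<le> r" "0 < r0" "U^2 \<le> c / 2" "U^2 < c"
    and Rd: "Rd = - 2 * R * U^2 / (r * (U^2 - c))"
  shows "Rd \<le> 2 / r0 * R"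
proof -
  have "r > 0" "c - U^2 > 0" using assms by auto
  have "r * (U^2 - c) = - (r * (c - U^2))" by (simp add: algebra_simps)
  then have "Rd = 2 * R * U^2 / (r * (c - U^2))" unfolding Rd by simp
  also have "\<dots> \<le> 2 * R * (c - U^2) / (r * (c - U^2))"
    using assms \<open>r > 0\<close> \<open>c - U^2 > 0\<close> by (intro divide_right_mono mult_left_mono) auto
  also have "\<dots> = 2 * R / r" using \<open>c - U^2 > 0\<close> by simp
  also have "\<dots> \<le> 2 * R / r0" using assms by (intro divide_left_mono) auto
  finally show ?thesis by simp
qed

lemma background_sol_density_bound:
  fixes u rho p :: "real \<Rightarrow> real"
  assumes "0 < r0" "r0 \<le> rb" "\<gamma> > 1" "ts \<le> 1/2" and bg: "background_sol \<gamma> r1 rb pb rhob ts u rho p"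
    and r: "r \<in> {rb..r1}"
  shows "rho r \<le> rhob * exp (2 * r1 / r0)"
proof -
  define c where "c r = csq \<gamma> p rho r" for r
  define rd where "rd r = - 2 * rho r * (u r)^2 / (r * ((u r)^2 - c r))" for r
  have dr: "(rho has_real_derivative rd r) (at r within {rb..r1})"
    and pos: "rho r > 0" "(u r)^2 < c r"
    if "r \<in> {rb..r1}" for r
    using bg that unfolding background_sol_def radial_sol_def rd_def c_def by auto
  have "rho r * exp (- (2 / r0) * r) \<le> rho rb * exp (- (2 / r0) * rb)"
  proof -
    let ?H = "\<lambda>x. - (rho x * exp (- (2 / r0) * x))"
    have "?H rb \<le> ?H r"
    proof (rule DERIV_nonneg_imp_nondecreasing_within[where S = "{rb..r1}" and f = ?H
        and f' = "\<lambda>z. (2 / r0 * rho z - rd z) * exp (- (2 / r0) * z)"])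
      fix z assume "z \<in> {rb..r}"
      then have z: "z \<in> {rb..r1}" using r by auto
      show "(?H has_real_derivative (2 / r0 * rho z - rd z) * exp (- (2 / r0) * z)) (at z within {rb..r1})"
        using \<open>0 < r0\<close> by (auto intro!: derivative_eq_intros dr[OF z] simp: algebra_simps)
      have "(u z)^2 / c z \<le> 1/2"
        using background_sol_tfun_bounds(2)[OF _ \<open>\<gamma> > 1\<close> bg z] assms(1,2,4)
        unfolding tfun_def c_def by linarith
      then have "(u z)^2 \<le> c z / 2"
        using pos[OF z] zero_le_power2[of "u z"] by (simp add: divide_le_eq)
      then have "rd z \<le> 2 / r0 * rho z"
        using pos[OF z] z assms(1,2) by (intro radial_density_deriv_le[OF _ _ \<open>0 < r0\<close>]) (auto simp: rd_def)
      then show "0 \<le> (2 / r0 * rho z - rd z) * exp (- (2 / r0) * z)" by simp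
    qed (use r in auto)
    then show ?thesis by simp
  qed
  also have "\<dots> \<le> rhob"
    using bg assms(1,2) pos(1)[of rb] r unfolding background_sol_def by auto
  finally have "rho r \<le> rhob * exp ((2 / r0) * r)" by (simp add: exp_minus field_simps)
  also have "\<dots> \<le> rhob * exp (2 * r1 / r0)"
    using r assms(1) bg pos(1)[of rb] unfolding background_sol_def by (auto intro!: mult_left_mono divide_right_mono)
  finally show ?thesis .
qed

lemma mu2_mu5_eq:
  assumes "\<gamma> > 1" "rhob > 0" "rb > 0" "ub > 0" "c2 > 0"
    and c2: "c2 = \<gamma> * pb / rhob" and ub: "ub^2 = ts * c2"
  shows "mu2 \<gamma> rb rhob ub c2 * mu5 \<gamma> rb pb ub c2
    = 4 * rb * ((\<gamma> - 1) * ts + 1) * (1 - ts) * c2 / ((\<gamma> + 1) * ub)"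
proof -
  have "\<gamma> * pb = c2 * rhob" using c2 assms(2) by simp
  have "\<gamma> + 1 > 0" using assms(1) by simp
  have "(\<gamma> - 1) * ub^2 + c2 = c2 * ((\<gamma> - 1) * ts + 1)" "ub^2 - c2 = - (c2 * (1 - ts))"
    unfolding ub by (simp_all add: algebra_simps)
  then show ?thesis
    unfolding mu2_def mu5_def \<open>\<gamma> * pb = c2 * rhob\<close>
    using assms(2-5) \<open>\<gamma> + 1 > 0\<close> by (simp add: divide_simps power2_eq_square)
qed

lemma mu6_div_mu2_mu5_le:
  assumes "\<gamma> > 1" "rhob > 0" "0 < r0" "r0 \<le> rb" "ub > 0" "c2 > 0" "ts \<le> 1/2"
    and c2: "c2 = \<gamma> * pb / rhob" and ub: "ub^2 = ts * c2"
  shows "mu6 \<gamma> ub ts / (mu2 \<gamma> rb rhob ub c2 * mu5 \<gamma> rb pb ub c2) \<le> 8 * \<gamma> / r0"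
proof -
  define Q where "Q = (\<gamma> - 1) * ts^2 + ts + 1"
  define W where "W = (\<gamma> - 1) * ts + 1"
  have "rb > 0" using assms(3,4) by simp
  have "ts = ub^2 / c2" using ub assms(6) by simp
  then have "ts \<ge> 0" using assms(6) by simp
  then have "W > 0" "Q \<ge> 0" unfolding W_def Q_def using assms(1) by (auto intro: add_nonneg_pos)
  have "2 * W - Q = (\<gamma> - 1) * ts * (2 - ts) + (1 - ts)"
    unfolding W_def Q_def by (simp add: algebra_simps power2_eq_square)
  moreover have "(\<gamma> - 1) * ts * (2 - ts) \<ge> 0" using assms(1,7) \<open>ts \<ge> 0\<close> by simp
  ultimately have "Q \<le> 2 * W" using assms(7) by linarith
  have "1/4 \<le> (1 - ts)^2"
    using power_mono[of "1/2" "1 - ts" 2] assms(7) by (simp add: power2_eq_square)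
  have "mu6 \<gamma> ub ts / (mu2 \<gamma> rb rhob ub c2 * mu5 \<gamma> rb pb ub c2)
      = 2 * \<gamma> * ts * Q / ((1 - ts)^2 * rb * W)"
    unfolding mu2_mu5_eq[OF assms(1,2) \<open>rb > 0\<close> assms(5,6) c2 ub] mu6_def Q_def W_def
    using \<open>ts = ub^2 / c2\<close> \<open>W > 0\<close> assms(1-7) by (simp add: W_def divide_simps power2_eq_square)
  also have "\<dots> \<le> 2 * \<gamma> * (1/2) * (2 * W) / (1/4 * r0 * W)"
  proof (rule frac_le)
    show "2 * \<gamma> * ts * Q \<le> 2 * \<gamma> * (1/2) * (2 * W)"
      using assms(1,7) \<open>ts \<ge> 0\<close> \<open>Q \<ge> 0\<close> \<open>Q \<le> 2 * W\<close> by (intro mult_mono) auto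
    show "1/4 * r0 * W \<le> (1 - ts)^2 * rb * W"
      using \<open>1/4 \<le> (1 - ts)^2\<close> \<open>W > 0\<close> assms(3,4) by (intro mult_right_mono mult_mono) auto
  qed (use assms(1,3) \<open>W > 0\<close> in auto)
  also have "\<dots> = 8 * \<gamma> / r0" using \<open>W > 0\<close> by (simp add: field_simps)
  finally show ?thesis .
qed

lemma initial_slope_ge:
  fixes \<gamma> pb rhob ts rb r0 ub c2 lam :: real
  assumes "\<gamma> > 1" "pb > 0" "rhob > 0" "0 < ts" "ts \<le> 1/2" "r0 \<le> rb" "0 < r0" "ub > 0"
    and c2: "c2 = \<gamma> * pb / rhob" and ub: "ub^2 = ts * c2" and "lam \<ge> 0"
  shows "- (lam + - mu0 \<gamma> ub c2 * mu6 \<gamma> ub ts) / (- mu0 \<gamma> ub c2 * mu2 \<gamma> rb rhob ub c2 * mu5 \<gamma> rb pb ub c2)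
    \<ge> - (8 * \<gamma> / r0)"
proof -
  define P where "P = mu2 \<gamma> rb rhob ub c2 * mu5 \<gamma> rb pb ub c2"
  have "c2 > 0" "rb > 0" using c2 assms by auto
  have "ub^2 < c2" using ub assms(4,5) \<open>c2 > 0\<close> by simp
  then have "mu0 \<gamma> ub c2 > 0" unfolding mu0_def using assms(1,8) by simp
  have "P > 0"
    unfolding P_def mu2_mu5_eq[OF assms(1,3) \<open>rb > 0\<close> assms(8) \<open>c2 > 0\<close> c2 ub]
    using assms \<open>c2 > 0\<close> by (intro divide_pos_pos mult_pos_pos add_nonneg_pos) auto
  have "- (lam + - mu0 \<gamma> ub c2 * mu6 \<gamma> ub ts) / (- mu0 \<gamma> ub c2 * mu2 \<gamma> rb rhob ub c2 * mu5 \<gamma> rb pb ub c2)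
      = lam / (mu0 \<gamma> ub c2 * P) - mu6 \<gamma> ub ts / P"
    using \<open>mu0 \<gamma> ub c2 > 0\<close> \<open>P > 0\<close> unfolding P_def by (simp add: divide_simps)
  moreover have "lam / (mu0 \<gamma> ub c2 * P) \<ge> 0" using assms(11) \<open>mu0 \<gamma> ub c2 > 0\<close> \<open>P > 0\<close> by simp
  moreover have "mu6 \<gamma> ub ts / P \<le> 8 * \<gamma> / r0"
    unfolding P_def by (rule mu6_div_mu2_mu5_le[OF assms(1,3,7,6,8) \<open>c2 > 0\<close> assms(5) c2 ub])
  ultimately show ?thesis by linarith
qed

lemma background_sol_coefficients_bounded:
  fixes r0 r1 \<gamma> rhob ts :: real
  assumes "0 < r0" "\<gamma> > 1" "rhob > 0" "0 < ts" "ts \<le> 1/2"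
  obtains B where "\<And>rb pb u rho p r. r0 \<le> rb \<Longrightarrow> background_sol \<gamma> r1 rb pb rhob ts u rho p \<Longrightarrow>
      r \<in> {rb..r1} \<Longrightarrow>
      \<bar>e2 \<gamma> r (tfun \<gamma> u rho p r)\<bar> \<le> B \<and> \<bar>e3 \<gamma> (tfun \<gamma> u rho p r)\<bar> \<le> B \<and>
      \<bar>e4 \<gamma> ts rhob (rho r) (tfun \<gamma> u rho p r)\<bar> \<le> B"
proof -
  have bounded: "\<exists>M. \<forall>t\<in>{0..1/2}. \<bar>f t\<bar> \<le> M" if "continuous_on {0..1/2} f" for f :: "real \<Rightarrow> real"
    using compact_imp_bounded[OF compact_continuous_image[OF that compact_Icc]]
    by (auto simp: bounded_iff)
  define f2 where "f2 t = ((1 + 2*\<gamma>) * t^2 - 3*t + 4) / (1 - t)" for t :: real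
  define f4 where "f4 t = 2 * (2 + (\<gamma> - 1) * t) / (1 - t)^3 * ((2*\<gamma> - 3) * t^2 + 8*t - 3)" for t :: real
  have "continuous_on {0..1/2} f2" "continuous_on {0..1/2} (e3 \<gamma>)" "continuous_on {0..1/2} f4"
    unfolding f2_def e3_def f4_def by (intro continuous_intros; auto)+
  then obtain M2 M3 M4 where M: "\<And>t. t \<in> {0..1/2} \<Longrightarrow> \<bar>f2 t\<bar> \<le> M2 \<and> \<bar>e3 \<gamma> t\<bar> \<le> M3 \<and> \<bar>f4 t\<bar> \<le> M4"
    using bounded by metis
  define K where "K = (1 - ts) / (rhob powr \<gamma> * (1 + (\<gamma> - 1) * ts))"
  have "K > 0" unfolding K_def using assms by (intro divide_pos_pos mult_pos_pos add_pos_nonneg) auto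
  define E where "E = exp (2 * r1 / r0)"
  show thesis
  proof (rule that[of "2 * r1 * \<bar>M2\<bar> + \<bar>M3\<bar> + K * (rhob * E) powr \<gamma> * \<bar>M4\<bar>"], intro conjI)
    fix rb pb u rho p r
    assume "r0 \<le> rb" and bg: "background_sol \<gamma> r1 rb pb rhob ts u rho p" and r: "r \<in> {rb..r1}"
    define T where "T = tfun \<gamma> u rho p r"
    have "0 < T" "T \<le> ts" unfolding T_def
      using background_sol_tfun_bounds[OF _ \<open>\<gamma> > 1\<close> bg r] assms(1) \<open>r0 \<le> rb\<close> by auto
    then have "T \<in> {0..1/2}" using assms by auto
    have "0 < r" "r \<le> r1" "rho r > 0" using r assms(1) \<open>r0 \<le> rb\<close> bg unfolding background_sol_def by auto
    have "rho r \<le> rhob * E"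
      unfolding E_def by (rule background_sol_density_bound[OF assms(1) \<open>r0 \<le> rb\<close> assms(2,5) bg r])
    have parts: "0 \<le> 2 * r1 * \<bar>M2\<bar>" "0 \<le> K * (rhob * E) powr \<gamma> * \<bar>M4\<bar>"
      using \<open>0 < r\<close> \<open>r \<le> r1\<close> \<open>K > 0\<close> by auto
    have "\<bar>e2 \<gamma> r T\<bar> = 2 * r * \<bar>f2 T\<bar>"
      using \<open>0 < r\<close> by (simp add: e2_def f2_def abs_mult)
    also have "\<dots> \<le> 2 * r1 * \<bar>M2\<bar>"
      using M[OF \<open>T \<in> {0..1/2}\<close>] \<open>0 < r\<close> \<open>r \<le> r1\<close> by (intro mult_mono) auto
    finally show "\<bar>e2 \<gamma> r T\<bar> \<le> 2 * r1 * \<bar>M2\<bar> + \<bar>M3\<bar> + K * (rhob * E) powr \<gamma> * \<bar>M4\<bar>"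
      using parts by linarith
    show "\<bar>e3 \<gamma> T\<bar> \<le> 2 * r1 * \<bar>M2\<bar> + \<bar>M3\<bar> + K * (rhob * E) powr \<gamma> * \<bar>M4\<bar>"
      using M[OF \<open>T \<in> {0..1/2}\<close>] parts by linarith
    have "e4 \<gamma> ts rhob (rho r) T = K * (rho r powr \<gamma> * f4 T)"
      unfolding e4_def K_def f4_def by (simp add: ac_simps)
    then have "\<bar>e4 \<gamma> ts rhob (rho r) T\<bar> = K * (rho r powr \<gamma> * \<bar>f4 T\<bar>)"
      using \<open>K > 0\<close> by (simp add: abs_mult)
    also have "\<dots> \<le> K * ((rhob * E) powr \<gamma> * \<bar>M4\<bar>)"
      using M[OF \<open>T \<in> {0..1/2}\<close>] \<open>K > 0\<close> \<open>rho r > 0\<close> \<open>rho r \<le> rhob * E\<close> assms(2)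
      by (intro mult_left_mono mult_mono powr_mono2) auto
    finally show "\<bar>e4 \<gamma> ts rhob (rho r) T\<bar> \<le> 2 * r1 * \<bar>M2\<bar> + \<bar>M3\<bar> + K * (rhob * E) powr \<gamma> * \<bar>M4\<bar>"
      using parts by (simp add: mult.assoc)
  qed
qed

lemma S_condition_of_short_shell:
  fixes u rho p :: "real \<Rightarrow> real"
  assumes "0 < r0" "r0 < rb" "rb < r1" "\<gamma> > 1" "pb > 0" "rhob > 0" "0 < ts" "ts \<le> 1/2"
    and bg: "background_sol \<gamma> r1 rb pb rhob ts u rho p"
    and coeffs: "\<And>r. r \<in> {rb..r1} \<Longrightarrow>
      \<bar>e2 \<gamma> r (tfun \<gamma> u rho p r)\<bar> \<le> B \<and> \<bar>e3 \<gamma> (tfun \<gamma> u rho p r)\<bar> \<le> B \<and>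
      \<bar>e4 \<gamma> ts rhob (rho r) (tfun \<gamma> u rho p r)\<bar> \<le> B"
    and "8 * \<gamma> / r0 \<le> B" "r1 - rb \<le> 1" "(r1 - rb) * B \<le> r0^2 / 100" "(r1 - rb) * B < 1/20"
  shows "S_condition \<gamma> r1 rb u rho p"
proof -
  define L where "L = r1 - rb"
  have init: "p rb = pb" "rho rb = rhob" "(u rb)^2 = ts * csq \<gamma> p rho rb" "u rb > 0"
    using bg assms(3) unfolding background_sol_def by auto
  have "csq \<gamma> p rho rb > 0" using bg assms(3,4) unfolding background_sol_def csq_def by auto
  then have "tfun \<gamma> u rho p rb = ts" using init unfolding tfun_def by simp
  have in_shell: "L * y + rb \<in> {rb..r1}" if "y \<in> {0..1}" for y
  proof -
    have "0 \<le> L * y" "L * y \<le> L" using that assms(3) by (auto simp: L_def mult_left_le)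
    then show ?thesis unfolding atLeastAtMost_iff using L_def by linarith
  qed
  have e1_ge: "e1 (L * y + rb) (tfun \<gamma> u rho p (L * y + rb)) \<ge> r0^2 / 2" if "y \<in> {0..1}" for y
  proof -
    have "r0^2 \<le> (L * y + rb)^2" using in_shell[OF that] assms(1,2) by (intro power_mono) auto
    moreover have "1/2 \<le> 1 - tfun \<gamma> u rho p (L * y + rb)"
      using background_sol_tfun_bounds(2)[OF _ assms(4) bg in_shell[OF that]] assms(1,2,8) by simp
    ultimately have "r0^2 * (1/2) \<le> (L * y + rb)^2 * (1 - tfun \<gamma> u rho p (L * y + rb))"
      by (intro mult_mono) auto
    then show ?thesis unfolding e1_def by simp
  qed
  show ?thesis
    unfolding S_condition_def Let_def \<open>tfun \<gamma> u rho p rb = ts\<close> init(1,2) L_def[symmetric]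
  proof (intro allI, rule perturbed_bvp_no_solution[where a = "r0^2 / 2" and B = B])
    fix n :: nat and y :: real assume "y \<in> {0..1}"
    with coeffs[OF in_shell[OF \<open>y \<in> {0..1}\<close>]] e1_ge
    show "r0^2 / 2 \<le> e1 (L * y + rb) (tfun \<gamma> u rho p (L * y + rb)) \<and>
      \<bar>e2 \<gamma> (L * y + rb) (tfun \<gamma> u rho p (L * y + rb))\<bar> \<le> B \<and>
      \<bar>e3 \<gamma> (tfun \<gamma> u rho p (L * y + rb))\<bar> \<le> B \<and>
      \<bar>e4 \<gamma> ts rhob (rho (L * y + rb)) (tfun \<gamma> u rho p (L * y + rb))\<bar> \<le> B"
      by blast
  next
    fix n :: nat
    have "csq \<gamma> p rho rb = \<gamma> * pb / rhob" using init(1,2) by (simp add: csq_def)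
    moreover have "0 \<le> real n * (real n + 1)" by simp
    ultimately have "- (8 * \<gamma> / r0) \<le> - (real n * (real n + 1) + - mu0 \<gamma> (u rb) (csq \<gamma> p rho rb) * mu6 \<gamma> (u rb) ts) /
        (- mu0 \<gamma> (u rb) (csq \<gamma> p rho rb) * mu2 \<gamma> rb rhob (u rb) (csq \<gamma> p rho rb) *
         mu5 \<gamma> rb pb (u rb) (csq \<gamma> p rho rb))"
      by (rule initial_slope_ge[OF assms(4-8) less_imp_le[OF assms(2)] assms(1) init(4) _ init(3)])
    then
    show "- B \<le> - (real n * (real n + 1) + - mu0 \<gamma> (u rb) (csq \<gamma> p rho rb) * mu6 \<gamma> (u rb) ts) /
        (- mu0 \<gamma> (u rb) (csq \<gamma> p rho rb) * mu2 \<gamma> rb rhob (u rb) (csq \<gamma> p rho rb) *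
         mu5 \<gamma> rb pb (u rb) (csq \<gamma> p rho rb))"
      using \<open>8 * \<gamma> / r0 \<le> B\<close> by linarith
  qed (use assms in \<open>auto simp: L_def\<close>)
qed

lemma S_condition_near_exit:
  fixes r0 r1 \<gamma> pb rhob ts :: real
  assumes "0 < r0" "r0 < r1" "\<gamma> > 1" "pb > 0" "rhob > 0" "0 < ts" "ts < 1/2"
  shows "\<exists>rs. r0 < rs \<and> rs < r1 \<and>
    (\<forall>rb u rho p. rs < rb \<and> rb < r1 \<and> background_sol \<gamma> r1 rb pb rhob ts u rho p
       \<longrightarrow> S_condition \<gamma> r1 rb u rho p)"
proof -
  obtain B0 where coeffs: "\<And>rb pb u rho p r. r0 \<le> rb \<Longrightarrow> background_sol \<gamma> r1 rb pb rhob ts u rho p \<Longrightarrow>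
      r \<in> {rb..r1} \<Longrightarrow>
      \<bar>e2 \<gamma> r (tfun \<gamma> u rho p r)\<bar> \<le> B0 \<and> \<bar>e3 \<gamma> (tfun \<gamma> u rho p r)\<bar> \<le> B0 \<and>
      \<bar>e4 \<gamma> ts rhob (rho r) (tfun \<gamma> u rho p r)\<bar> \<le> B0"
    using background_sol_coefficients_bounded[OF assms(1,3,5,6)] \<open>ts < 1/2\<close>
    by (metis less_imp_le)
  define B where "B = max B0 (8 * \<gamma> / r0) + 1"
  define m where "m = min 1 (min (r0^2 / 100) (1/40))"
  define rs where "rs = max ((r0 + r1) / 2) (r1 - m / B)"
  have "B \<ge> 8 * \<gamma> / r0 + 1" "8 * \<gamma> / r0 > 0" "m > 0"
    using \<open>0 < r0\<close> \<open>\<gamma> > 1\<close> by (auto simp: B_def m_def)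
  then have "B \<ge> 1" by linarith
  show ?thesis
  proof (intro exI[of _ rs] conjI allI impI; (elim conjE)?)
    show "r0 < rs" "rs < r1" using assms \<open>B \<ge> 1\<close> \<open>m > 0\<close> by (auto simp: rs_def less_max_iff_disj)
    fix rb u rho p
    assume "rs < rb" "rb < r1" and bg: "background_sol \<gamma> r1 rb pb rhob ts u rho p"
    have "r0 < rb" using \<open>rs < rb\<close> \<open>r0 < r1\<close> by (simp add: rs_def)
    have "(r1 - rb) * B < m" using \<open>rs < rb\<close> \<open>B \<ge> 1\<close> by (simp add: rs_def field_simps)
    moreover have "r1 - rb \<le> (r1 - rb) * B" using \<open>rb < r1\<close> \<open>B \<ge> 1\<close> by simp
    ultimately have small: "r1 - rb \<le> 1" "(r1 - rb) * B \<le> r0^2 / 100" "(r1 - rb) * B < 1/20"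
      by (auto simp: m_def)
    have "B0 \<le> B" "8 * \<gamma> / r0 \<le> B" by (simp_all add: B_def)
    with coeffs[OF less_imp_le[OF \<open>r0 < rb\<close>] bg]
    have "\<bar>e2 \<gamma> r (tfun \<gamma> u rho p r)\<bar> \<le> B \<and> \<bar>e3 \<gamma> (tfun \<gamma> u rho p r)\<bar> \<le> B \<and>
      \<bar>e4 \<gamma> ts rhob (rho r) (tfun \<gamma> u rho p r)\<bar> \<le> B" if "r \<in> {rb..r1}" for r
      using that by fastforce
    with \<open>8 * \<gamma> / r0 \<le> B\<close> small \<open>r0 < rb\<close> \<open>rb < r1\<close> show "S_condition \<gamma> r1 rb u rho p"
      by (intro S_condition_of_short_shell[OF \<open>0 < r0\<close> _ _ \<open>\<gamma> > 1\<close> \<open>pb > 0\<close> \<open>rhob > 0\<close> \<open>0 < ts\<close> _ bg])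
        (use \<open>ts < 1/2\<close> in auto)
  qed
qed

theorem lemma2p7:
  fixes r0 r1 :: real
  assumes "0 < r0" and "r0 < r1"
  shows "\<exists>\<sigma>0. 0 < \<sigma>0 \<and> \<sigma>0 < 1 \<and>
    (\<forall>\<gamma> pb rhob ts. \<gamma> > 1 \<and> pb > 0 \<and> rhob > 0 \<and> 0 < ts \<and> ts < \<sigma>0 \<longrightarrow>
       (\<exists>rs. r0 < rs \<and> rs < r1 \<and>
          (\<forall>rb u rho p. rs < rb \<and> rb < r1 \<and> background_sol \<gamma> r1 rb pb rhob ts u rho p
               \<longrightarrow> S_condition \<gamma> r1 rb u rho p)))"
  using S_condition_near_exit[OF assms] by (intro exI[of _ "1/2"]) auto

end
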